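(* Let $n\ge1$ and $0<\varphi<1$. Let $\mathbf B=(B_1,\dots,B_n)$ be $\{0,1\}$-valued random variables whose joint distribution $\mu$ belongs to $\overline{\mathcal B_\varphi}$, and let $\hat\Theta=\frac1n\sum_{i=1}^nB_i$. Then for each $P\in\{P_{\mathrm{X},n},P_{\mathrm{CH},n},P_{\mathrm{PBR},n}\}$ and every $p\ge0$, $$\mathbb{P}_\mu\big(P(\hat\Theta|\varphi)\le p\big)\le p.$$
   Context: $\overline{\mathcal B_\varphi}$ is the set of distributions $\mu$ of $(B_1,\dots,B_n)\in\{0,1\}^n$ such that for every $i$ and every $\mathbf b_{\le i-1}\in\{0,1\}^{i-1}$ with $\mathbb{P}_\mu(\mathbf B_{\le i-1}=\mathbf b_{\le i-1})>0$, $\mathbb{P}_\mu(B_i=1\mid \mathbf B_{\le i-1}=\mathbf b_{\le i-1})\le\varphi$. For $t\in[0,1]$ with $nt$ an integer (convention $0^0=1$): $P_{\mathrm{X},n}(t|\varphi)=\sum_{k\ge nt}\binom{n}{k}\varphi^k(1-\varphi)^{n-k}$; $P_{\mathrm{CH},n}(t|\varphi)=\left(\frac{\varphi}{t}\right)^{nt}\left(\frac{1-\varphi}{1-t}\right)^{n(1-t)}$ if $t\ge\varphi$, and $=1$ otherwise; $P_{\mathrm{PBR},n}(t|\varphi)=\varphi^{nt}(1-\varphi)^{n(1-t)}(n+1)\binom{n}{nt}$ if $t\ge\varphi$, and $=t^{nt}(1-t)^{n(1-t)}(n+1)\binom{n}{nt}$ otherwise. *)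

theory Defs
  imports "HOL-Probability.Probability"
begin

text \<open>A joint distribution of (B_1,...,B_n) in {0,1}^n is a pmf on boolean lists of
length n; the list entry xs ! i is B_(i+1) (True = 1).\<close>

definition Bbar :: "nat \<Rightarrow> real \<Rightarrow> bool list pmf set" where
  "Bbar n \<phi> = {\<mu>. set_pmf \<mu> \<subseteq> {xs. length xs = n} \<and>
     (\<forall>i<n. \<forall>b::bool list. length b = i \<longrightarrow>
        measure_pmf.prob \<mu> {xs. take i xs = b} > 0 \<longrightarrow>
        measure_pmf.prob \<mu> {xs. take i xs = b \<and> xs ! i}
          / measure_pmf.prob \<mu> {xs. take i xs = b} \<le> \<phi>)}"

definition Theta_hat :: "nat \<Rightarrow> bool list \<Rightarrow> real" where
  "Theta_hat n xs = real (length (filter id xs)) / real n"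

text \<open>The quantity n t is assumed to be an integer; it is used as the natural
number nat floor (n t) (exact in that case).  Natural-number exponents give the
convention 0^0 = 1.\<close>
definition nt :: "nat \<Rightarrow> real \<Rightarrow> nat" where
  "nt n t = nat \<lfloor>real n * t\<rfloor>"

definition P_X :: "nat \<Rightarrow> real \<Rightarrow> real \<Rightarrow> real" where
  "P_X n t \<phi> = (\<Sum>k\<in>{k. k \<le> n \<and> real k \<ge> real n * t}.
      real (n choose k) * \<phi> ^ k * (1 - \<phi>) ^ (n - k))"

definition P_CH :: "nat \<Rightarrow> real \<Rightarrow> real \<Rightarrow> real" where
  "P_CH n t \<phi> = (if t \<ge> \<phi>
      then (\<phi> / t) ^ nt n t * ((1 - \<phi>) / (1 - t)) ^ (n - nt n t)
      else 1)"

definition P_PBR :: "nat \<Rightarrow> real \<Rightarrow> real \<Rightarrow> real" where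
  "P_PBR n t \<phi> = (if t \<ge> \<phi>
      then \<phi> ^ nt n t * (1 - \<phi>) ^ (n - nt n t) * real (n + 1) * real (n choose nt n t)
      else t ^ nt n t * (1 - t) ^ (n - nt n t) * real (n + 1) * real (n choose nt n t))"

end

theory Submission
  imports Defs
begin

text \<open>The number of ones under any \<open>\<mu> \<in> Bbar n \<phi>\<close> is stochastically dominated by
\<open>Binomial(n, \<phi>)\<close>: revealing one coordinate at a time, the conditional probability of a 1 is
at most \<open>\<phi>\<close>, and the binomial tail \<open>G(k) = P(Bin(n,\<phi>) \<ge> k)\<close> is antitone in \<open>k\<close>.
Each of the three p-values at \<open>t = k/n\<close> dominates \<open>G(k)\<close>: \<open>P_X\<close> is \<open>G(k)\<close>, \<open>P_CH\<close> is the
Chernoff bound on it, and \<open>P_PBR = P_CH \<cdot> (n+1) \<cdot> Bin(n,t)(k)\<close>, where the last factor is at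
least 1 because \<open>k\<close> is a mode of \<open>Bin(n, k/n)\<close>. So \<open>P(\<Theta>) \<le> p\<close> forces the number of
ones to be at least the least \<open>k\<close> with \<open>G(k) \<le> p\<close>, an event of probability at most \<open>p\<close>.\<close>

definition binomial_tail :: "nat \<Rightarrow> real \<Rightarrow> nat \<Rightarrow> real" where
  "binomial_tail m \<phi> k = measure_pmf.prob (binomial_pmf m \<phi>) {k..}"

lemma measure_pmf_bind_bernoulli:
  assumes "0 \<le> p" "p \<le> 1"
  shows "measure_pmf.prob (bernoulli_pmf p \<bind> N) X =
         p * measure_pmf.prob (N True) X + (1 - p) * measure_pmf.prob (N False) X"
proof -
  have "ennreal (measure_pmf.prob (bernoulli_pmf p \<bind> N) X) =
        ennreal (p * measure_pmf.prob (N True) X + (1 - p) * measure_pmf.prob (N False) X)"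
    using assms by (simp add: measure_pmf.emeasure_eq_measure[symmetric] ennreal_mult mult.commute)
  then show ?thesis
    using assms by (subst (asm) ennreal_inj) auto
qed

lemma binomial_tail_Suc:
  assumes "0 \<le> \<phi>" "\<phi> \<le> 1"
  shows "binomial_tail (Suc m) \<phi> k = \<phi> * binomial_tail m \<phi> (k - 1) + (1 - \<phi>) * binomial_tail m \<phi> k"
proof -
  have "{i. k \<le> Suc i} = {k - 1..}" by auto
  then show ?thesis
    using assms unfolding binomial_tail_def
    by (simp add: binomial_pmf_Suc map_pmf_def[symmetric] measure_pmf_bind_bernoulli vimage_def atLeast_def)
qed

lemma binomial_tail_0: "0 \<le> \<phi> \<Longrightarrow> \<phi> \<le> 1 \<Longrightarrow> binomial_tail 0 \<phi> k = (if k = 0 then 1 else 0)"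
  unfolding binomial_tail_def by (simp add: binomial_pmf_0)

lemma binomial_tail_antimono: "k \<le> k' \<Longrightarrow> binomial_tail m \<phi> k' \<le> binomial_tail m \<phi> k"
  unfolding binomial_tail_def by (intro measure_pmf.finite_measure_mono) auto

lemma binomial_tail_le_1: "binomial_tail m \<phi> k \<le> 1"
  unfolding binomial_tail_def by simp

lemma binomial_tail_eq_sum:
  assumes "0 \<le> \<phi>" "\<phi> \<le> 1"
  shows "binomial_tail m \<phi> k = (\<Sum>i=k..m. real (m choose i) * \<phi> ^ i * (1 - \<phi>) ^ (m - i))"
proof -
  have "set_pmf (binomial_pmf m \<phi>) \<subseteq> {..m}"
    using assms by (auto simp: set_pmf_binomial_eq)
  then have "binomial_tail m \<phi> k = measure_pmf.prob (binomial_pmf m \<phi>) {k..m}"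
    unfolding binomial_tail_def
    by (intro measure_pmf.finite_measure_eq_AE) (auto simp: AE_measure_pmf_iff)
  then show ?thesis
    using assms by (simp add: measure_measure_pmf_finite)
qed

lemma binomial_tail_exp_moment_bound:
  assumes "0 \<le> \<phi>" "\<phi> \<le> 1" "1 \<le> l"
  shows "l ^ k * binomial_tail m \<phi> k \<le> (\<phi> * l + (1 - \<phi>)) ^ m"
proof -
  define c where "c i = real (m choose i) * \<phi> ^ i * (1 - \<phi>) ^ (m - i)" for i
  have c_nonneg: "0 \<le> c i" for i
    unfolding c_def using assms by simp
  have "l ^ k * binomial_tail m \<phi> k = (\<Sum>i=k..m. c i * l ^ k)"
    unfolding binomial_tail_eq_sum[OF assms(1,2)] c_def by (simp add: sum_distrib_left mult.commute)
  also have "\<dots> \<le> (\<Sum>i=k..m. c i * l ^ i)"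
    using assms c_nonneg by (intro sum_mono mult_left_mono power_increasing) auto
  also have "\<dots> \<le> (\<Sum>i\<le>m. c i * l ^ i)"
    using assms c_nonneg by (intro sum_mono2) auto
  also have "\<dots> = (\<Sum>i\<le>m. real (m choose i) * (\<phi> * l) ^ i * (1 - \<phi>) ^ (m - i))"
    unfolding c_def by (simp add: power_mult_distrib mult_ac)
  also have "\<dots> = (\<phi> * l + (1 - \<phi>)) ^ m"
    by (rule binomial_ring[symmetric])
  finally show ?thesis .
qed

lemma binomial_tail_chernoff:
  assumes "0 < \<phi>" "\<phi> < 1" "k \<le> m" "\<phi> \<le> real k / real m"
  defines "t \<equiv> real k / real m"
  shows "binomial_tail m \<phi> k \<le> (\<phi> / t) ^ k * ((1 - \<phi>) / (1 - t)) ^ (m - k)"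
proof (cases "k = m")
  case True
  then show ?thesis
    using assms by (simp add: binomial_tail_eq_sum)
next
  case False
  then have "k < m" using assms by simp
  have t: "\<phi> \<le> t" "t < 1"
    using assms \<open>k < m\<close> by auto
  define r where "r = (1 - \<phi>) / (1 - t)"
  \<comment> \<open>the optimal tilt, for which \<open>\<phi> l / (\<phi> l + 1 - \<phi>) = t\<close>\<close>
  define l where "l = r * t / \<phi>"
  have "1 \<le> l"
  proof -
    have "\<phi> * (1 - t) \<le> (1 - \<phi>) * t"
      using t by (simp add: algebra_simps)
    then show ?thesis
      using assms(1,2) t unfolding l_def r_def by (simp add: field_simps)
  qed
  moreover have "\<phi> * l + (1 - \<phi>) = r"
    using assms(1,2) t unfolding l_def r_def by (simp add: field_simps)
  ultimately have "l ^ k * binomial_tail m \<phi> k \<le> r ^ m"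
    using binomial_tail_exp_moment_bound[of \<phi> l k m] assms by simp
  also have "r ^ m = l ^ k * ((\<phi> / t) ^ k * r ^ (m - k))"
    using \<open>k < m\<close> assms t unfolding l_def
    by (simp add: power_mult_distrib power_divide field_simps power_add[symmetric])
  finally show ?thesis
    using \<open>1 \<le> l\<close> unfolding r_def by simp
qed

lemma pmf_binomial_Suc_ratio:
  assumes "0 \<le> t" "t \<le> 1" "j < m"
  shows "pmf (binomial_pmf m t) (Suc j) * (real (Suc j) * (1 - t)) =
         pmf (binomial_pmf m t) j * (real (m - j) * t)"
proof -
  have "(m choose Suc j) * Suc j = (m choose j) * (m - j)"
    using binomial_absorb_comp[of m j] binomial_absorption[of j m] by (simp add: mult.commute)
  then have choose: "real (m choose Suc j) * real (Suc j) = real (m choose j) * real (m - j)"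
    by (metis of_nat_mult)
  have "m - j = Suc (m - Suc j)"
    using assms by simp
  then have "pmf (binomial_pmf m t) j * (real (m - j) * t) =
      (real (m choose j) * real (m - j)) * (t ^ j * t) * ((1 - t) ^ (m - Suc j) * (1 - t))"
    using assms by (simp add: mult_ac del: of_nat_diff)
  also have "\<dots> = (real (m choose Suc j) * real (Suc j)) * (t ^ j * t) * ((1 - t) ^ (m - Suc j) * (1 - t))"
    by (simp only: choose)
  also have "\<dots> = pmf (binomial_pmf m t) (Suc j) * (real (Suc j) * (1 - t))"
    using assms by (simp add: mult_ac del: of_nat_diff)
  finally show ?thesis ..
qed

lemma pmf_binomial_le_mode:
  assumes "k \<le> m" "0 < m"
  shows "pmf (binomial_pmf m (real k / real m)) j \<le> pmf (binomial_pmf m (real k / real m)) k"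
proof -
  define t where "t = real k / real m"
  have t: "0 \<le> t" "t \<le> 1"
    using assms unfolding t_def by auto
  let ?b = "pmf (binomial_pmf m t)"
  \<comment> \<open>\<open>?b (Suc i) / ?b i = (m - i) t / ((i + 1) (1 - t))\<close>, which is \<open>\<ge> 1\<close> exactly for \<open>i < k\<close>\<close>
  have sign: "real m * (real (Suc i) * (1 - t) - real (m - i) * t) = real m * (real (Suc i) - real k) - real k"
    if "i \<le> m" for i
    using that assms by (simp add: t_def of_nat_diff field_simps)
  have up: "?b i \<le> ?b (Suc i)" if "i < k" for i
  proof -
    have "real m * (real (Suc i) - real k) \<le> 0"
      using that by (intro mult_nonneg_nonpos) auto
    then have "real m * (real (Suc i) * (1 - t) - real (m - i) * t) \<le> 0"
      using sign[of i] that assms(1) by simp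
    then have "real (Suc i) * (1 - t) \<le> real (m - i) * t"
      using assms(2) by (simp add: mult_le_0_iff)
    then have "?b i * (real (m - i) * t) \<le> ?b (Suc i) * (real (m - i) * t)"
      using pmf_binomial_Suc_ratio[OF t, of i] that assms(1) by (metis mult_left_mono pmf_nonneg less_le_trans)
    moreover have "0 < real (m - i) * t"
      using that assms unfolding t_def by auto
    ultimately show ?thesis
      by (rule mult_right_le_imp_le)
  qed
  have down: "?b (Suc i) \<le> ?b i" if "k \<le> i" "i < m" for i
  proof -
    have "real m * 1 \<le> real m * (real (Suc i) - real k)"
      using that by (intro mult_left_mono) auto
    moreover have "real k \<le> real m"
      using assms(1) by simp
    ultimately have "0 \<le> real m * (real (Suc i) * (1 - t) - real (m - i) * t)"
      using sign[of i] that by linarith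
    then have "real (m - i) * t \<le> real (Suc i) * (1 - t)"
      using assms(2) by (simp add: zero_le_mult_iff)
    then have "?b (Suc i) * (real (Suc i) * (1 - t)) \<le> ?b i * (real (Suc i) * (1 - t))"
      using pmf_binomial_Suc_ratio[OF t that(2)] by (metis mult_left_mono pmf_nonneg)
    moreover have "0 < real (Suc i) * (1 - t)"
      using that assms unfolding t_def by auto
    ultimately show ?thesis
      by (rule mult_right_le_imp_le)
  qed
  have below_mode: "?b (k - d) \<le> ?b k" for d
  proof (induction d)
    case (Suc d)
    show ?case
    proof (cases "d < k")
      case True
      then have "k - d = Suc (k - Suc d)"
        by simp
      then show ?thesis
        using up[of "k - Suc d"] Suc.IH True by simp
    qed (use Suc.IH in simp)
  qed simp
  have above_mode: "?b (k + d) \<le> ?b k" if "k + d \<le> m" for d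
    using that
  proof (induction d)
    case (Suc d)
    then show ?case
      using down[of "k + d"] by simp
  qed simp
  consider "j \<le> k" | "k < j" "j \<le> m" | "m < j"
    by linarith
  then have "?b j \<le> ?b k"
  proof cases
    case 1
    then show ?thesis
      using below_mode[of "k - j"] by simp
  next
    case 2
    then show ?thesis
      using above_mode[of "j - k"] by simp
  next
    case 3
    then show ?thesis
      using t by (simp add: binomial_eq_0)
  qed
  then show ?thesis
    by (simp only: t_def)
qed

lemma pmf_binomial_mode_lower_bound:
  assumes "k \<le> m" "0 < m"
  shows "1 \<le> real (m + 1) * pmf (binomial_pmf m (real k / real m)) k"
proof -
  let ?p = "binomial_pmf m (real k / real m)"
  have "set_pmf ?p \<subseteq> {..m}"
    using assms by (auto simp: set_pmf_binomial_eq)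
  then have "1 = (\<Sum>j\<le>m. pmf ?p j)"
    by (simp add: sum_pmf_eq_1)
  also have "\<dots> \<le> (\<Sum>j\<le>m. pmf ?p k)"
    using assms by (intro sum_mono pmf_binomial_le_mode)
  finally show ?thesis
    by simp
qed

definition successes :: "bool list \<Rightarrow> nat" where
  "successes xs = length (filter id xs)"

lemma successes_snoc [simp]: "successes (xs @ [x]) = successes xs + (if x then 1 else 0)"
  by (simp add: successes_def)

lemma Bbar_length: "\<mu> \<in> Bbar n \<phi> \<Longrightarrow> xs \<in> set_pmf \<mu> \<Longrightarrow> length xs = n"
  unfolding Bbar_def by auto

lemma Bbar_take_Suc:
  "\<mu> \<in> Bbar n \<phi> \<Longrightarrow> xs \<in> set_pmf \<mu> \<Longrightarrow> i < n \<Longrightarrow> take (Suc i) xs = take i xs @ [xs ! i]"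
  by (simp add: Bbar_length take_Suc_conv_app_nth)

lemma Bbar_prob_prefix_split:
  assumes "\<mu> \<in> Bbar n \<phi>" "i < n"
  shows "measure_pmf.prob \<mu> {xs. take i xs = b \<and> Q xs} =
         measure_pmf.prob \<mu> {xs. take (Suc i) xs = b @ [True] \<and> Q xs} +
         measure_pmf.prob \<mu> {xs. take (Suc i) xs = b @ [False] \<and> Q xs}"
proof -
  have "measure_pmf.prob \<mu> {xs. take i xs = b \<and> Q xs} =
        measure_pmf.prob \<mu> ({xs. take (Suc i) xs = b @ [True] \<and> Q xs} \<union>
                            {xs. take (Suc i) xs = b @ [False] \<and> Q xs})"
    using Bbar_take_Suc[OF assms(1) _ assms(2)]
    by (intro measure_pmf.finite_measure_eq_AE) (auto simp: AE_measure_pmf_iff)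
  also have "\<dots> = measure_pmf.prob \<mu> {xs. take (Suc i) xs = b @ [True] \<and> Q xs} +
                  measure_pmf.prob \<mu> {xs. take (Suc i) xs = b @ [False] \<and> Q xs}"
    by (rule measure_pmf.finite_measure_Union) auto
  finally show ?thesis .
qed

lemma Bbar_prob_prefix_True:
  assumes "\<mu> \<in> Bbar n \<phi>" "i < n" "length b = i"
  shows "measure_pmf.prob \<mu> {xs. take (Suc i) xs = b @ [True]} \<le> \<phi> * measure_pmf.prob \<mu> {xs. take i xs = b}"
proof -
  let ?prefix = "measure_pmf.prob \<mu> {xs. take i xs = b}"
  have "measure_pmf.prob \<mu> {xs. take (Suc i) xs = b @ [True]} = measure_pmf.prob \<mu> {xs. take i xs = b \<and> xs ! i}"
    using Bbar_take_Suc[OF assms(1) _ assms(2)]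
    by (intro measure_pmf.finite_measure_eq_AE) (auto simp: AE_measure_pmf_iff)
  also have "\<dots> \<le> \<phi> * ?prefix"
  proof (cases "?prefix = 0")
    case True
    have "measure_pmf.prob \<mu> {xs. take i xs = b \<and> xs ! i} \<le> ?prefix"
      by (rule measure_pmf.finite_measure_mono) auto
    then show ?thesis
      using True by simp
  next
    case False
    then have pos: "0 < ?prefix"
      using measure_nonneg[of \<mu> "{xs. take i xs = b}"] by linarith
    then have "measure_pmf.prob \<mu> {xs. take i xs = b \<and> xs ! i} / ?prefix \<le> \<phi>"
      using assms unfolding Bbar_def by blast
    then show ?thesis
      using pos by (simp add: divide_le_eq mult.commute)
  qed
  finally show ?thesis .
qed

lemma Bbar_prob_prefix_successes_ge:
  assumes B: "\<mu> \<in> Bbar n \<phi>" and "0 \<le> \<phi>" "\<phi> \<le> 1"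
  shows "d \<le> n \<Longrightarrow> length b = n - d \<Longrightarrow>
    measure_pmf.prob \<mu> {xs. take (n - d) xs = b \<and> k \<le> successes xs}
      \<le> measure_pmf.prob \<mu> {xs. take (n - d) xs = b} * binomial_tail d \<phi> (k - successes b)"
proof (induction d arbitrary: b k)
  case 0
  show ?case
  proof (cases "k \<le> successes b")
    case True
    have "measure_pmf.prob \<mu> {xs. take n xs = b \<and> k \<le> successes xs} \<le>
          measure_pmf.prob \<mu> {xs. take n xs = b}"
      by (rule measure_pmf.finite_measure_mono) auto
    moreover have "binomial_tail 0 \<phi> (k - successes b) = 1"
      using True assms by (simp add: binomial_tail_0)
    ultimately show ?thesis
      by simp
  next
    case False
    have "{xs. take n xs = b \<and> k \<le> successes xs} \<inter> set_pmf \<mu> = {}"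
      using Bbar_length[OF B] False by auto
    then have "measure_pmf.prob \<mu> {xs. take n xs = b \<and> k \<le> successes xs} = 0"
      by (metis measure_Int_set_pmf measure_empty)
    moreover have "binomial_tail 0 \<phi> (k - successes b) = 0"
      using False assms by (simp add: binomial_tail_0)
    ultimately show ?thesis
      by simp
  qed
next
  case (Suc d)
  define i where "i = n - Suc d"
  have i: "i < n" "Suc i = n - d" "length b = i"
    using Suc.prems unfolding i_def by auto
  let ?prob = "measure_pmf.prob \<mu>"
  let ?c = "successes b"
  define a where "a = binomial_tail d \<phi> (k - ?c - 1)"
  define g where "g = binomial_tail d \<phi> (k - ?c)"
  let ?pT = "?prob {xs. take (Suc i) xs = b @ [True]}"
  let ?pF = "?prob {xs. take (Suc i) xs = b @ [False]}"
  let ?pb = "?prob {xs. take i xs = b}"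
  have "?prob {xs. take i xs = b \<and> k \<le> successes xs} =
        ?prob {xs. take (Suc i) xs = b @ [True] \<and> k \<le> successes xs} +
        ?prob {xs. take (Suc i) xs = b @ [False] \<and> k \<le> successes xs}"
    by (rule Bbar_prob_prefix_split[OF B i(1)])
  also have "\<dots> \<le> ?pT * a + ?pF * g"
    using Suc.IH[of "b @ [True]" k] Suc.IH[of "b @ [False]" k] Suc.prems i
    unfolding a_def g_def by (intro add_mono) simp_all
  also have "\<dots> = ?pb * g + ?pT * (a - g)"
    using Bbar_prob_prefix_split[OF B i(1), of b "\<lambda>_. True"] by (simp add: algebra_simps)
  \<comment> \<open>\<open>g \<le> a\<close>, so the bound grows with the mass \<open>?pT\<close> of the branch where the next coordinate is 1\<close>
  also have "\<dots> \<le> ?pb * g + (\<phi> * ?pb) * (a - g)"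
    using Bbar_prob_prefix_True[OF B i(1,3)] binomial_tail_antimono[of "k - ?c - 1" "k - ?c" d \<phi>]
    unfolding a_def g_def by (intro add_left_mono mult_right_mono) auto
  also have "\<dots> = ?pb * binomial_tail (Suc d) \<phi> (k - ?c)"
    unfolding a_def g_def binomial_tail_Suc[OF assms(2,3)] by (simp add: algebra_simps)
  finally show ?case
    unfolding i_def .
qed

lemma Bbar_prob_successes_ge:
  assumes "\<mu> \<in> Bbar n \<phi>" "0 \<le> \<phi>" "\<phi> \<le> 1"
  shows "measure_pmf.prob \<mu> {xs. k \<le> successes xs} \<le> binomial_tail n \<phi> k"
  using Bbar_prob_prefix_successes_ge[OF assms, of n "[]" k] by (simp add: successes_def)

lemma measure_pmf_tail_bound_le_level:
  fixes M :: "'a pmf" and X :: "'a \<Rightarrow> nat" and F :: "nat \<Rightarrow> real"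
  assumes tail: "\<And>k. measure_pmf.prob M {x. k \<le> X x} \<le> F k" and "0 \<le> p"
  shows "measure_pmf.prob M {x. F (X x) \<le> p} \<le> p"
proof (cases "\<exists>k. F k \<le> p")
  case True
  define k0 where "k0 = (LEAST k. F k \<le> p)"
  have "{x. F (X x) \<le> p} \<subseteq> {x. k0 \<le> X x}"
    unfolding k0_def by (auto intro: Least_le)
  then have "measure_pmf.prob M {x. F (X x) \<le> p} \<le> F k0"
    using tail[of k0] measure_pmf.finite_measure_mono[of "{x. F (X x) \<le> p}" "{x. k0 \<le> X x}" M]
    by simp
  also have "F k0 \<le> p"
    unfolding k0_def using True by (rule LeastI_ex)
  finally show ?thesis .
next
  case False
  then show ?thesis
    using \<open>0 \<le> p\<close> by simp
qed

lemma nt_of_nat_div [simp]: "0 < n \<Longrightarrow> nt n (real k / real n) = k"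
  unfolding nt_def by simp

lemma P_X_eq_binomial_tail:
  assumes "0 < n" "0 \<le> \<phi>" "\<phi> \<le> 1"
  shows "P_X n (real k / real n) \<phi> = binomial_tail n \<phi> k"
proof -
  have "{i. i \<le> n \<and> real n * (real k / real n) \<le> real i} = {k..n}"
    using assms by auto
  then show ?thesis
    unfolding P_X_def binomial_tail_eq_sum[OF assms(2,3)] by simp
qed

lemma binomial_tail_le_P_CH:
  assumes "0 < n" "k \<le> n" "0 < \<phi>" "\<phi> < 1"
  shows "binomial_tail n \<phi> k \<le> P_CH n (real k / real n) \<phi>"
  using binomial_tail_chernoff[OF assms(3,4,2)] binomial_tail_le_1 assms(1)
  unfolding P_CH_def by simp

lemma P_PBR_eq_P_CH_mult:
  assumes "0 < n" "k \<le> n" "0 < \<phi>" "\<phi> \<le> real k / real n"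
  defines "t \<equiv> real k / real n"
  shows "P_PBR n t \<phi> = P_CH n t \<phi> * (real (n + 1) * pmf (binomial_pmf n t) k)"
proof -
  have t: "0 < t" "t \<le> 1"
    using assms by auto
  have "(\<phi> / t) ^ k * t ^ k = \<phi> ^ k"
    using t by (simp add: power_divide)
  moreover have "((1 - \<phi>) / (1 - t)) ^ (n - k) * (1 - t) ^ (n - k) = (1 - \<phi>) ^ (n - k)"
  proof (cases "t = 1")
    case True
    then have "k = n"
      using assms(1) unfolding t_def by simp
    then show ?thesis
      by simp
  next
    case False
    then show ?thesis
      using t by (simp add: power_divide)
  qed
  ultimately show ?thesis
    using assms t unfolding P_PBR_def P_CH_def by (simp add: mult_ac)
qed

lemma binomial_tail_le_P_PBR:
  assumes "0 < n" "k \<le> n" "0 < \<phi>" "\<phi> < 1"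
  shows "binomial_tail n \<phi> k \<le> P_PBR n (real k / real n) \<phi>"
proof (cases "\<phi> \<le> real k / real n")
  case True
  have CH: "binomial_tail n \<phi> k \<le> P_CH n (real k / real n) \<phi>"
    by (rule binomial_tail_le_P_CH[OF assms])
  also have "\<dots> \<le> P_CH n (real k / real n) \<phi> * (real (n + 1) * pmf (binomial_pmf n (real k / real n)) k)"
  proof -
    have "0 \<le> P_CH n (real k / real n) \<phi>"
      using CH unfolding binomial_tail_def by (meson measure_nonneg order_trans)
    then show ?thesis
      using pmf_binomial_mode_lower_bound[OF assms(2,1)] by (simp add: mult_le_cancel_left1)
  qed
  also have "\<dots> = P_PBR n (real k / real n) \<phi>"
    by (rule P_PBR_eq_P_CH_mult[OF assms(1-3) True, symmetric])
  finally show ?thesis .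
next
  case False
  have "binomial_tail n \<phi> k \<le> real (n + 1) * pmf (binomial_pmf n (real k / real n)) k"
    using pmf_binomial_mode_lower_bound[OF assms(2,1)] binomial_tail_le_1 by (rule order_trans[rotated])
  then show ?thesis
    using False assms unfolding P_PBR_def by (simp add: mult_ac)
qed

lemma binomial_tail_le_P:
  assumes "P \<in> {P_X, P_CH, P_PBR}" "0 < n" "k \<le> n" "0 < \<phi>" "\<phi> < 1"
  shows "binomial_tail n \<phi> k \<le> P n (real k / real n) \<phi>"
  using assms P_X_eq_binomial_tail[of n \<phi> k] binomial_tail_le_P_CH binomial_tail_le_P_PBR by auto

theorem mainTheorem14:
  fixes n :: nat and \<phi> :: real and \<mu> :: "bool list pmf"
  assumes "n \<ge> 1" and "0 < \<phi>" and "\<phi> < 1" and "\<mu> \<in> Bbar n \<phi>"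
  shows "\<forall>P \<in> {P_X, P_CH, P_PBR}. \<forall>p::real. p \<ge> 0 \<longrightarrow>
           measure_pmf.prob \<mu> {xs. P n (Theta_hat n xs) \<phi> \<le> p} \<le> p"
proof (intro ballI allI impI)
  fix P and p :: real
  assume P: "P \<in> {P_X, P_CH, P_PBR}" and "0 \<le> p"
  have "binomial_tail n \<phi> (successes xs) \<le> P n (Theta_hat n xs) \<phi>" if "xs \<in> set_pmf \<mu>" for xs
  proof -
    have "successes xs \<le> n"
      using Bbar_length[OF assms(4) that] unfolding successes_def by (metis length_filter_le)
    then show ?thesis
      using binomial_tail_le_P[OF P _ _ assms(2,3)] assms(1)
      unfolding Theta_hat_def successes_def by simp
  qed
  then have "{xs. P n (Theta_hat n xs) \<phi> \<le> p} \<inter> set_pmf \<mu> \<subseteq> {xs. binomial_tail n \<phi> (successes xs) \<le> p}"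
    by force
  then have "measure_pmf.prob \<mu> {xs. P n (Theta_hat n xs) \<phi> \<le> p} \<le>
             measure_pmf.prob \<mu> {xs. binomial_tail n \<phi> (successes xs) \<le> p}"
    by (metis measure_Int_set_pmf measure_pmf.finite_measure_mono sets_measure_pmf UNIV_I)
  also have "\<dots> \<le> p"
    using Bbar_prob_successes_ge[OF assms(4)] assms(2,3) \<open>0 \<le> p\<close>
    by (intro measure_pmf_tail_bound_le_level) auto
  finally show "measure_pmf.prob \<mu> {xs. P n (Theta_hat n xs) \<phi> \<le> p} \<le> p" .
qed

end
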